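(* Let $\beta>0$, $0<\alpha<1$, and define $T\colon\mathbb R\to\mathbb R$ by $Tx=x-\beta$ if $x\le\beta$ and $Tx=\alpha(x-\beta)$ if $x>\beta$. Set $q(x):=\left\lceil\log_\alpha\frac{\beta}{\alpha\beta+(1-\alpha)x}\right\rceil$ for $x>\beta$. Then $\operatorname{Fix}T=\varnothing$, $v:=P_{\overline{\operatorname{ran}}(\mathrm{Id}-T)}0=\beta$, and for all $n\in\mathbb N$ and $x\in\mathbb R$: $(T_{-v})^nx=\alpha^n\max\{x,0\}+\min\{x,0\}$; $(v+T)^nx=\alpha^n\max\{x-\beta,0\}+\min\{x,\beta\}$; $T^nx+nv=x$ if $x\le\beta$; $=\alpha^nx-\frac{\alpha(1-\alpha^n)}{1-\alpha}\beta+n\beta$ if $x>\beta$ and $n<q(x)$; $=\alpha^{q(x)}x-\frac{\alpha(1-\alpha^{q(x)})}{1-\alpha}\beta+q(x)\beta$ if $x>\beta$ and $n\ge q(x)$. Consequently $\lim_n(T_{-v})^nx=\min\{x,0\}$, $\lim_n(v+T)^nx=\min\{x,\beta\}$, and $\lim_n(T^nx+nv)$ equals $x$ if $x\le\beta$ and $\alpha^{q(x)}x-\frac{\alpha(1-\alpha^{q(x)})}{1-\alpha}\beta+q(x)\beta$ if $x>\beta$. Moreover, there is no map $S\colon\mathbb R\to\mathbb R$ such that $S^nx=T^nx+nv$ for all $x\in\mathbb R$ and all $n\in\mathbb N$.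
   Context: $T_{-v}x:=T(x+v)$, $(v+T)x:=v+Tx$, $\operatorname{Fix}$ denotes the fixed point set, and $\overline{\operatorname{ran}}(\mathrm{Id}-T)$ is the closure of the range of $\mathrm{Id}-T$. *)

theory Defs
  imports "HOL-Analysis.Analysis"
begin

end

theory Submission
  imports Defs
begin

text \<open>
  Above \<open>\<beta>\<close> the map \<open>T\<close> is an affine contraction, below \<open>\<beta>\<close> it is the
  translation by \<open>-\<beta>\<close>. Hence \<open>x - T x \<ge> \<beta>\<close> with equality exactly on \<open>(-\<infinity>, \<beta>]\<close>, which gives
  \<open>v = \<beta>\<close> and the absence of fixed points. Both conjugates \<open>T (\<cdot> + \<beta>)\<close> and \<open>\<beta> + T\<close> are the
  identity below a threshold and a contraction towards it above, so their orbits are explicit.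
  An orbit of \<open>T\<close> starting above \<open>\<beta>\<close> follows the affine contraction for exactly \<open>q x\<close> steps
  and is then translated by \<open>-\<beta>\<close> forever, so \<open>T\<^sup>n x + n\<beta>\<close> becomes constant from \<open>n = q x\<close> on.
  Such eventually constant sequences are not orbits of a single map: the point
  \<open>x = \<beta> + 2\<beta>/\<alpha>\<close> is sent to \<open>3\<beta>\<close>, but the second step from \<open>x\<close> disagrees with the first
  step from \<open>3\<beta>\<close>.
\<close>

lemma less_power_iff_less_log:
  fixes a r :: real
  assumes "0 < a" "a < 1" "0 < r"
  shows "r < a ^ k \<longleftrightarrow> real k < log a r"
proof -
  have "r < a ^ k \<longleftrightarrow> ln r < ln (a ^ k)"
    using assms by simp
  also have "\<dots> \<longleftrightarrow> ln r < real k * ln a"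
    using assms by (simp add: ln_realpow)
  also have "\<dots> \<longleftrightarrow> real k < ln r / ln a"
    using assms by (simp add: neg_less_divide_eq)
  finally show ?thesis by (simp add: log_def)
qed

lemma funpow_contraction_above:
  fixes g :: "real \<Rightarrow> real"
  assumes "0 < a" and g: "\<And>y. g y = (if y \<le> c then y else c + a * (y - c))"
  shows "(g ^^ n) x = a ^ n * max (x - c) 0 + min x c"
proof (induction n)
  case (Suc n)
  show ?case
  proof (cases "x \<le> c")
    case False
    then have "a ^ n * (x - c) > 0" using \<open>0 < a\<close> by simp
    then show ?thesis using Suc False by (simp add: g)
  qed (use Suc in \<open>simp add: g\<close>)
qed simp

lemma LIMSEQ_funpow_contraction_above:
  fixes g :: "real \<Rightarrow> real"
  assumes "0 < a" "a < 1" and "\<And>y. g y = (if y \<le> c then y else c + a * (y - c))"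
  shows "(\<lambda>n. (g ^^ n) x) \<longlonglongrightarrow> min x c"
proof -
  have "(\<lambda>n. a ^ n * max (x - c) 0 + min x c) \<longlonglongrightarrow> 0 * max (x - c) 0 + min x c"
    using assms by (intro tendsto_intros) auto
  then show ?thesis
    using funpow_contraction_above[OF assms(1,3)] by simp
qed

lemma funpow_translation_below:
  fixes T :: "real \<Rightarrow> real"
  assumes "b \<ge> 0" and T: "\<And>y. y \<le> b \<Longrightarrow> T y = y - b" and "x \<le> b"
  shows "(T ^^ n) x = x - real n * b"
proof (induction n)
  case (Suc n)
  have "real n * b \<ge> 0" using assms(1) by simp
  then have "(T ^^ n) x \<le> b" using Suc assms(3) by simp
  then show ?case using Suc by (simp add: T algebra_simps)
qed simp

locale piecewise_contraction =
  fixes \<alpha> \<beta> :: real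
  assumes beta_pos: "\<beta> > 0" and alpha_pos: "0 < \<alpha>" and alpha_less_1: "\<alpha> < 1"
begin

definition T :: "real \<Rightarrow> real" where
  "T x = (if x \<le> \<beta> then x - \<beta> else \<alpha> * (x - \<beta>))"

text \<open>The closed form of \<open>T\<^sup>k x\<close> as long as the orbit stays above \<open>\<beta>\<close>.\<close>

definition affine_orbit :: "real \<Rightarrow> nat \<Rightarrow> real" where
  "affine_orbit x k = \<alpha> ^ k * x - \<alpha> * (1 - \<alpha> ^ k) / (1 - \<alpha>) * \<beta>"

definition exit_time :: "real \<Rightarrow> int" where
  "exit_time x = \<lceil>log \<alpha> (\<beta> / (\<alpha> * \<beta> + (1 - \<alpha>) * x))\<rceil>"

lemma T_le: "x \<le> \<beta> \<Longrightarrow> T x = x - \<beta>"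
  and T_gt: "x > \<beta> \<Longrightarrow> T x = \<alpha> * (x - \<beta>)"
  by (simp_all add: T_def)

lemma no_fixed_point: "{x. T x = x} = {}"
proof -
  have "T x \<noteq> x" for x
  proof (cases "x \<le> \<beta>")
    case False
    have "x * (1 - \<alpha>) > 0" using False beta_pos alpha_less_1 by simp
    moreover have "\<alpha> * \<beta> > 0" using alpha_pos beta_pos by simp
    ultimately show ?thesis using False by (simp add: T_gt algebra_simps)
  qed (use beta_pos in \<open>simp add: T_le\<close>)
  then show ?thesis by blast
qed

lemma range_id_minus_T: "range (\<lambda>x. x - T x) = {\<beta>..}"
proof (intro equalityI subsetI)
  fix y assume "y \<in> range (\<lambda>x. x - T x)"
  then obtain x where y: "y = x - T x" by blast
  show "y \<in> {\<beta>..}"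
  proof (cases "x \<le> \<beta>")
    case False
    then have "(1 - \<alpha>) * \<beta> \<le> (1 - \<alpha>) * x" using alpha_less_1 by simp
    then show ?thesis using False y by (simp add: T_gt algebra_simps)
  qed (simp add: y T_le)
next
  fix y :: real assume "y \<in> {\<beta>..}"
  then consider "y = \<beta>" | "y > \<beta>" by fastforce
  then show "y \<in> range (\<lambda>x. x - T x)"
  proof cases
    case 1
    then have "y = 0 - T 0" using beta_pos by (simp add: T_le)
    then show ?thesis by blast
  next
    case 2
    define z where "z = (y - \<alpha> * \<beta>) / (1 - \<alpha>)"
    have z: "z * (1 - \<alpha>) = y - \<alpha> * \<beta>" using alpha_less_1 by (simp add: z_def)
    then have "z * (1 - \<alpha>) > \<beta> * (1 - \<alpha>)" using 2 by (simp add: algebra_simps)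
    then have "z > \<beta>" using alpha_less_1 by simp
    then have "y = z - T z" using z by (simp add: T_gt algebra_simps)
    then show ?thesis by blast
  qed
qed

lemma minimal_displacement: "closest_point (closure (range (\<lambda>x. x - T x))) 0 = \<beta>"
proof -
  have "\<beta> = closest_point {\<beta>..} 0"
    by (rule closest_point_unique) (use beta_pos in \<open>auto simp: dist_real_def\<close>)
  then show ?thesis by (simp add: range_id_minus_T)
qed

lemma funpow_T_shifted_argument: "((\<lambda>y. T (y + \<beta>)) ^^ n) x = \<alpha> ^ n * max x 0 + min x 0"
  and LIMSEQ_funpow_T_shifted_argument: "(\<lambda>n. ((\<lambda>y. T (y + \<beta>)) ^^ n) x) \<longlonglongrightarrow> min x 0"
proof -
  have g: "T (y + \<beta>) = (if y \<le> 0 then y else 0 + \<alpha> * (y - 0))" for y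
    by (simp add: T_def)
  from funpow_contraction_above[OF alpha_pos g] LIMSEQ_funpow_contraction_above[OF alpha_pos alpha_less_1 g]
  show "((\<lambda>y. T (y + \<beta>)) ^^ n) x = \<alpha> ^ n * max x 0 + min x 0"
    and "(\<lambda>n. ((\<lambda>y. T (y + \<beta>)) ^^ n) x) \<longlonglongrightarrow> min x 0" by simp_all
qed

lemma funpow_T_shifted_value: "((\<lambda>y. \<beta> + T y) ^^ n) x = \<alpha> ^ n * max (x - \<beta>) 0 + min x \<beta>"
  and LIMSEQ_funpow_T_shifted_value: "(\<lambda>n. ((\<lambda>y. \<beta> + T y) ^^ n) x) \<longlonglongrightarrow> min x \<beta>"
proof -
  have g: "\<beta> + T y = (if y \<le> \<beta> then y else \<beta> + \<alpha> * (y - \<beta>))" for y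
    by (simp add: T_def)
  from funpow_contraction_above[OF alpha_pos g] LIMSEQ_funpow_contraction_above[OF alpha_pos alpha_less_1 g]
  show "((\<lambda>y. \<beta> + T y) ^^ n) x = \<alpha> ^ n * max (x - \<beta>) 0 + min x \<beta>"
    and "(\<lambda>n. ((\<lambda>y. \<beta> + T y) ^^ n) x) \<longlonglongrightarrow> min x \<beta>" by simp_all
qed

lemma funpow_T_le: "x \<le> \<beta> \<Longrightarrow> (T ^^ n) x + real n * \<beta> = x"
  using funpow_translation_below[of \<beta> T x n] beta_pos by (simp add: T_le)

lemma funpow_T_affine_orbit:
  assumes "\<And>k. k < n \<Longrightarrow> affine_orbit x k > \<beta>"
  shows "(T ^^ n) x = affine_orbit x n"
  using assms
proof (induction n)
  case (Suc n)
  then have IH: "(T ^^ n) x = affine_orbit x n" and "affine_orbit x n > \<beta>" by simp_all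
  then have "(T ^^ Suc n) x = \<alpha> * (affine_orbit x n - \<beta>)" by (simp add: T_gt)
  then show ?case
    using alpha_less_1 by (simp add: affine_orbit_def field_simps)
qed (simp add: affine_orbit_def)

lemma affine_orbit_gt_iff:
  assumes "x > \<beta>"
  shows "affine_orbit x k > \<beta> \<longleftrightarrow> int k < exit_time x"
proof -
  define D where "D = \<alpha> * \<beta> + (1 - \<alpha>) * x"
  have "(1 - \<alpha>) * x > (1 - \<alpha>) * \<beta>" using assms alpha_less_1 by simp
  then have D: "D > \<beta>" by (simp add: D_def algebra_simps)
  have "affine_orbit x k * (1 - \<alpha>) = \<alpha> ^ k * D - \<alpha> * \<beta>"
    using alpha_less_1 by (simp add: affine_orbit_def D_def field_simps)
  then have "affine_orbit x k > \<beta> \<longleftrightarrow> \<beta> < \<alpha> ^ k * D"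
    using alpha_less_1 mult_less_cancel_right_pos[of "1 - \<alpha>" \<beta> "affine_orbit x k"]
    by (simp add: algebra_simps)
  also have "\<dots> \<longleftrightarrow> \<beta> / D < \<alpha> ^ k"
    using D beta_pos by (simp add: pos_divide_less_eq)
  also have "\<dots> \<longleftrightarrow> real k < log \<alpha> (\<beta> / D)"
    using less_power_iff_less_log[OF alpha_pos alpha_less_1] D beta_pos by simp
  finally show ?thesis by (simp add: exit_time_def D_def less_ceiling_iff)
qed

lemma exit_time_nonneg: "x > \<beta> \<Longrightarrow> exit_time x \<ge> 0"
  using affine_orbit_gt_iff[of x 0] by (simp add: affine_orbit_def)

lemma funpow_T_until_exit:
  "x > \<beta> \<Longrightarrow> int n \<le> exit_time x \<Longrightarrow> (T ^^ n) x = affine_orbit x n"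
  by (rule funpow_T_affine_orbit) (simp add: affine_orbit_gt_iff)

lemma funpow_T_after_exit:
  assumes "x > \<beta>" and "int n \<ge> exit_time x"
  shows "(T ^^ n) x + real n * \<beta> = affine_orbit x (nat (exit_time x)) + of_int (exit_time x) * \<beta>"
proof -
  define Q where "Q = nat (exit_time x)"
  have Q: "exit_time x = int Q" and "Q \<le> n"
    using exit_time_nonneg[OF assms(1)] assms(2) by (simp_all add: Q_def)
  have "(T ^^ Q) x = affine_orbit x Q"
    using assms(1) Q by (intro funpow_T_until_exit) simp_all
  moreover have "affine_orbit x Q \<le> \<beta>"
    using affine_orbit_gt_iff[OF assms(1), of Q] Q by simp
  moreover have "(T ^^ n) x = (T ^^ (n - Q)) ((T ^^ Q) x)"
    using \<open>Q \<le> n\<close> by (metis funpow_add le_add_diff_inverse2 o_apply)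
  ultimately have "(T ^^ n) x + real n * \<beta> = affine_orbit x Q + real Q * \<beta>"
    using funpow_T_le[of "affine_orbit x Q" "n - Q"] \<open>Q \<le> n\<close> by (simp add: of_nat_diff algebra_simps)
  then show ?thesis unfolding Q_def[symmetric] Q by simp
qed

lemma LIMSEQ_funpow_T_plus_shift:
  assumes "x > \<beta>"
  shows "(\<lambda>n. (T ^^ n) x + real n * \<beta>) \<longlonglongrightarrow>
    affine_orbit x (nat (exit_time x)) + of_int (exit_time x) * \<beta>"
proof (rule tendsto_eventually)
  show "\<forall>\<^sub>F n in sequentially. (T ^^ n) x + real n * \<beta> =
      affine_orbit x (nat (exit_time x)) + of_int (exit_time x) * \<beta>"
    unfolding eventually_sequentially
    using funpow_T_after_exit[OF assms] by (metis nat_le_iff)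
qed

lemma not_funpow_T_plus_shift: "\<nexists>S. \<forall>x n. (S ^^ n) x = (T ^^ n) x + real n * \<beta>"
proof
  assume "\<exists>S. \<forall>x n. (S ^^ n) x = (T ^^ n) x + real n * \<beta>"
  then obtain S where S: "\<And>x n. (S ^^ n) x = (T ^^ n) x + real n * \<beta>" by blast
  define x where "x = \<beta> + 2 * \<beta> / \<alpha>"
  have "x > \<beta>" using beta_pos alpha_pos by (simp add: x_def)
  then have Tx: "T x = 2 * \<beta>" using alpha_pos by (simp add: T_gt x_def field_simps)
  have "S x = 3 * \<beta>" using S[of 1 x] Tx by simp
  moreover have "S (3 * \<beta>) = 2 * \<alpha> * \<beta> + \<beta>" using S[of 1 "3 * \<beta>"] beta_pos by (simp add: T_gt)
  moreover have "S (S x) = \<alpha> * \<beta> + 2 * \<beta>"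
    using S[of 2 x] Tx beta_pos by (simp add: numeral_2_eq_2 T_gt T_le)
  ultimately have "\<beta> * (1 - \<alpha>) = 0" by (simp add: algebra_simps)
  then show False using beta_pos alpha_less_1 by simp
qed

end

theorem mainTheorem7:
  fixes \<alpha> \<beta> v :: real and T :: "real \<Rightarrow> real" and q :: "real \<Rightarrow> int"
  assumes hb: "\<beta> > 0" and ha0: "0 < \<alpha>" and ha1: "\<alpha> < 1"
    and T_def: "T = (\<lambda>x. if x \<le> \<beta> then x - \<beta> else \<alpha> * (x - \<beta>))"
    and q_def: "\<And>x. x > \<beta> \<Longrightarrow> q x = \<lceil>log \<alpha> (\<beta> / (\<alpha> * \<beta> + (1 - \<alpha>) * x))\<rceil>"
    and v_def: "v = closest_point (closure (range (\<lambda>x. x - T x))) 0"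
  shows "{x. T x = x} = {}
    \<and> v = \<beta>
    \<and> (\<forall>n x. ((\<lambda>y. T (y + v)) ^^ n) x = \<alpha> ^ n * max x 0 + min x 0)
    \<and> (\<forall>n x. ((\<lambda>y. v + T y) ^^ n) x = \<alpha> ^ n * max (x - \<beta>) 0 + min x \<beta>)
    \<and> (\<forall>n x. x \<le> \<beta> \<longrightarrow> (T ^^ n) x + real n * v = x)
    \<and> (\<forall>n x. x > \<beta> \<and> int n < q x \<longrightarrow>
          (T ^^ n) x + real n * v = \<alpha> ^ n * x - \<alpha> * (1 - \<alpha> ^ n) / (1 - \<alpha>) * \<beta> + real n * \<beta>)
    \<and> (\<forall>n x. x > \<beta> \<and> int n \<ge> q x \<longrightarrow>
          (T ^^ n) x + real n * v = \<alpha> powi q x * x - \<alpha> * (1 - \<alpha> powi q x) / (1 - \<alpha>) * \<beta>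
             + real_of_int (q x) * \<beta>)
    \<and> (\<forall>x. (\<lambda>n. ((\<lambda>y. T (y + v)) ^^ n) x) \<longlonglongrightarrow> min x 0)
    \<and> (\<forall>x. (\<lambda>n. ((\<lambda>y. v + T y) ^^ n) x) \<longlonglongrightarrow> min x \<beta>)
    \<and> (\<forall>x. x \<le> \<beta> \<longrightarrow> (\<lambda>n. (T ^^ n) x + real n * v) \<longlonglongrightarrow> x)
    \<and> (\<forall>x. x > \<beta> \<longrightarrow> (\<lambda>n. (T ^^ n) x + real n * v) \<longlonglongrightarrow>
          \<alpha> powi q x * x - \<alpha> * (1 - \<alpha> powi q x) / (1 - \<alpha>) * \<beta> + real_of_int (q x) * \<beta>)
    \<and> \<not> (\<exists>S :: real \<Rightarrow> real. \<forall>x n. (S ^^ n) x = (T ^^ n) x + real n * v)"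
proof -
  interpret piecewise_contraction \<alpha> \<beta> using hb ha0 ha1 by unfold_locales
  have T: "T = piecewise_contraction.T \<alpha> \<beta>"
    using assms(4) by (auto simp: fun_eq_iff T_le T_gt)
  have v: "v = \<beta>" using v_def minimal_displacement by (simp add: T)
  have q: "x > \<beta> \<Longrightarrow> q x = exit_time x" for x by (simp add: q_def exit_time_def)
  have powi_exit_time: "x > \<beta> \<Longrightarrow> \<alpha> powi exit_time x = \<alpha> ^ nat (exit_time x)" for x
    using exit_time_nonneg by (metis nat_0_le power_int_of_nat)
  have below: "(T ^^ n) x + real n * v = x" if "x \<le> \<beta>" for n x
    using funpow_T_le[OF that] by (simp add: T v)
  have before: "(T ^^ n) x + real n * v = \<alpha> ^ n * x - \<alpha> * (1 - \<alpha> ^ n) / (1 - \<alpha>) * \<beta> + real n * \<beta>"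
    if "x > \<beta>" "int n < q x" for n x
    using funpow_T_until_exit[of x n] that by (simp add: T v q affine_orbit_def)
  have after: "(T ^^ n) x + real n * v = \<alpha> powi q x * x - \<alpha> * (1 - \<alpha> powi q x) / (1 - \<alpha>) * \<beta>
      + of_int (q x) * \<beta>" if "x > \<beta>" "int n \<ge> q x" for n x
    using funpow_T_after_exit[of x n] that by (simp add: T v q powi_exit_time affine_orbit_def)
  have after_lim: "(\<lambda>n. (T ^^ n) x + real n * v) \<longlonglongrightarrow>
      \<alpha> powi q x * x - \<alpha> * (1 - \<alpha> powi q x) / (1 - \<alpha>) * \<beta> + of_int (q x) * \<beta>" if "x > \<beta>" for x
    using LIMSEQ_funpow_T_plus_shift[OF that] that by (simp add: T v q powi_exit_time affine_orbit_def)
  have "{x. T x = x} = {}" and "\<nexists>S. \<forall>x n. (S ^^ n) x = (T ^^ n) x + real n * v"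
    using no_fixed_point not_funpow_T_plus_shift by (simp_all add: T v)
  then show ?thesis
    using funpow_T_shifted_argument LIMSEQ_funpow_T_shifted_argument
      funpow_T_shifted_value LIMSEQ_funpow_T_shifted_value
      below before after after_lim by (simp add: T v)
qed

end
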